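(* In the setting of the context, let $\mathcal{K}$ be an arbitrary set of policies and define (with $\inf\emptyset=+\infty$) $\varphi:=\inf\{h(y): y\in M_1\}$, $\varphi_1:=\inf\{h(y):y\in M_1\cap\mathcal{K}\}$, $\varphi_3:=\inf\{h(y): y\in\Pi(M_2\cap\mathcal{K})\}$, $\varphi_4:=\inf\{h(y):y\in M_1\cap\Pi(\mathcal{K})\}$, and, with $Y^*:=\arg\min\{h(y):y\in M_2\cap\mathcal{K}\}$, $\varphi_2:=\inf\{h(z): z\in\Pi(Y^* )\}$. Then every element of $M_1\cap\mathcal{K}$, of $\Pi(M_2\cap\mathcal{K})$, of $M_1\cap\Pi(\mathcal{K})$ and of $\Pi(Y^* )$ belongs to $M_1$ (i.e. is feasible for the problem $\min\{h(y):y\in M_1\}$), and \[ \varphi_1\ge\varphi_3,\qquad \varphi_2\ge \varphi_3\ge\varphi_4\ge\varphi . \]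
   Context: Let $T\ge 2$, $M\ge 1$ and $n_1,\dots,n_T\ge 1$ be integers. Let $\xi=(\xi_1,\dots,\xi_T)$ be a random vector with values in $\mathbb{R}^{MT}$, $\xi_t\in\mathbb{R}^M$, on a probability space $(\Omega,\mathcal{A},\mathbb{P})$; $\xi_{1:t}:=(\xi_1,\dots,\xi_t)$. A policy is a tuple $y=(y_t)_{t=1}^T$ where $y_1\in\mathbb{R}^{n_1}$ is deterministic and, for $t\ge 2$, $y_t:\mathbb{R}^{M(t-1)}\to\mathbb{R}^{n_t}$ is Borel measurable, evaluated at $\xi_{1:t-1}$. For $t=1,\dots,T$, $\tau=1,\dots,t$, $k\in\{1,2,3\}$ let $A^{(k)}_{t,\tau}$, $B^{(k)}_{t,\tau}$ be real matrices and $b^{(k)}_t$ vectors of compatible sizes, with $B^{(3)}_{t,t}=0$; let $h_t\in\mathbb{R}^{n_t}$ and let $\mathcal{P}_t\ge 0$ be nonnegative vectors. The objective is $h(y):=\sum_{t=1}^T\mathbb{E}\big\{\langle h_t,y_t(\xi_{1:t-1})\rangle+\langle\mathcal{P}_t,(\sum_{\tau=1}^tA^{(1)}_{t,\tau}y_\tau(\xi_{1:\tau-1})+\sum_{\tau=1}^tB^{(1)}_{t,\tau}\xi_\tau-b^{(1)}_t)_+\rangle\big\}$ (assumed well defined in $\mathbb{R}\cup\{+\infty\}$), where $(\cdot)_+$ is the componentwise maximum with $0$. Fix $p\in(0,1]$. Define $M_1$ = set of policies $y$ with $\mathbb{P}\big(\sum_{\tau=1}^t A^{(2)}_{t,\tau}y_\tau(\xi_{1:\tau-1})+\sum_{\tau=1}^t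 B^{(2)}_{t,\tau}\xi_\tau\le b^{(2)}_t,\ t=1,\dots,T\big)\ge p$ and $\sum_{\tau=1}^t A^{(3)}_{t,\tau}y_\tau(\xi_{1:\tau-1})+\sum_{\tau=1}^{t-1} B^{(3)}_{t,\tau}\xi_\tau\le b^{(3)}_t$ for $t=1,\dots,T$, $\mathbb{P}$-a.s.; $M_2$ = set of policies $y$ with $\mathbb{P}\big(\forall t:\ \sum_{\tau=1}^t A^{(2)}_{t,\tau}y_\tau(\xi_{1:\tau-1})+\sum_{\tau=1}^t B^{(2)}_{t,\tau}\xi_\tau\le b^{(2)}_t\text{ and }\sum_{\tau=1}^t A^{(3)}_{t,\tau}y_\tau(\xi_{1:\tau-1})+\sum_{\tau=1}^{t-1} B^{(3)}_{t,\tau}\xi_\tau\le b^{(3)}_t\big)\ge p$. Let $X_t(z_{1:t-1},\xi_{1:t-1}):=\{u\in\mathbb{R}^{n_t}:A^{(3)}_{t,t}u\le b^{(3)}_t-\sum_{\tau<t}B^{(3)}_{t,\tau}\xi_\tau-\sum_{\tau<t}A^{(3)}_{t,\tau}z_\tau\}$, assumed nonempty for all arguments, and $\pi_X$ the Euclidean projection onto $X$. The operator $\Pi$ maps a policy $y$ to $z=\Pi(y)$ with $z_1:=\pi_{X_1}(y_1)$ and $z_t(\xi_{1:t-1}):=\pi_{X_t(z_1,z_2(\xi_1),\dots,z_{t-1}(\xi_{1:t-2}),\xi_{1:t-1})}(y_t(\xi_{1:t-1}))$ for all $\xi_{1:t-1}$, $t\ge 2$; $\Pi(y)$ is assumed to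 be a policy. $\Pi(\mathcal{K}):=\{\Pi(y):y\in\mathcal{K}\}$. *)

theory Defs
  imports "HOL-Probability.Probability"
begin

text \<open>Time indices t run over {1..horizon}; constraint groups k over {1,2,3}.
  Vectors are functions nat => real on an explicit index range {..<d};
  matrices are functions nat => nat => real (row i, column j).
  Amat D k t tau : mdim D k t x ndim D tau;  Bmat D k t tau : mdim D k t x xdim D;
  bvec D k t : mdim D k t;  hvec D t : ndim D t;  Pvec D t : mdim D 1 t.\<close>
record msp_data =
  horizon :: nat
  xdim :: nat
  ndim :: "nat \<Rightarrow> nat"
  mdim :: "nat \<Rightarrow> nat \<Rightarrow> nat"
  Amat :: "nat \<Rightarrow> nat \<Rightarrow> nat \<Rightarrow> nat \<Rightarrow> nat \<Rightarrow> real"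
  Bmat :: "nat \<Rightarrow> nat \<Rightarrow> nat \<Rightarrow> nat \<Rightarrow> nat \<Rightarrow> real"
  bvec :: "nat \<Rightarrow> nat \<Rightarrow> nat \<Rightarrow> real"
  hvec :: "nat \<Rightarrow> nat \<Rightarrow> real"
  Pvec :: "nat \<Rightarrow> nat \<Rightarrow> real"

type_synonym hist = "nat \<times> nat \<Rightarrow> real"
type_synonym vec = "nat \<Rightarrow> real"
type_synonym policy = "nat \<Rightarrow> hist \<Rightarrow> vec"

text \<open>Index set of the history xi_{1:t-1}: coordinates (tau, j), 1 <= tau < t, j < M.
  The history space R^{M(t-1)} is the finite product PiM over this index set.\<close>
definition Hidx :: "msp_data \<Rightarrow> nat \<Rightarrow> (nat \<times> nat) set" where
  "Hidx D t = {1..<t} \<times> {..<xdim D}"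

text \<open>A policy: y_t is a Borel measurable map R^{M(t-1)} -> R^{n_t}, t = 1..T
  (for t = 1 the history space is a single point, so y_1 is deterministic).\<close>
definition is_policy :: "msp_data \<Rightarrow> policy \<Rightarrow> bool" where
  "is_policy D y \<longleftrightarrow> (\<forall>t\<in>{1..horizon D}.
     y t \<in> measurable (PiM (Hidx D t) (\<lambda>_. (borel :: real measure)))
                       (PiM {..<ndim D t} (\<lambda>_. (borel :: real measure))))"

text \<open>xi :: omega => tau => j => real, xi omega tau j = j-th component of xi_tau.\<close>
definition histo :: "msp_data \<Rightarrow> ('a \<Rightarrow> nat \<Rightarrow> nat \<Rightarrow> real) \<Rightarrow> nat \<Rightarrow> 'a \<Rightarrow> hist" where
  "histo D \<xi> t \<omega> = restrict (\<lambda>(\<tau>, j). \<xi> \<omega> \<tau> j) (Hidx D t)"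

definition polval :: "msp_data \<Rightarrow> ('a \<Rightarrow> nat \<Rightarrow> nat \<Rightarrow> real) \<Rightarrow> policy \<Rightarrow> nat \<Rightarrow> 'a \<Rightarrow> vec" where
  "polval D \<xi> y t \<omega> = y t (histo D \<xi> t \<omega>)"

definition cons2 :: "msp_data \<Rightarrow> ('a \<Rightarrow> nat \<Rightarrow> nat \<Rightarrow> real) \<Rightarrow> policy \<Rightarrow> 'a \<Rightarrow> bool" where
  "cons2 D \<xi> y \<omega> \<longleftrightarrow> (\<forall>t\<in>{1..horizon D}. \<forall>i<mdim D 2 t.
     (\<Sum>\<tau>\<in>{1..t}. \<Sum>j<ndim D \<tau>. Amat D 2 t \<tau> i j * polval D \<xi> y \<tau> \<omega> j)
     + (\<Sum>\<tau>\<in>{1..t}. \<Sum>j<xdim D. Bmat D 2 t \<tau> i j * \<xi> \<omega> \<tau> j) \<le> bvec D 2 t i)"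

definition cons3 :: "msp_data \<Rightarrow> ('a \<Rightarrow> nat \<Rightarrow> nat \<Rightarrow> real) \<Rightarrow> policy \<Rightarrow> 'a \<Rightarrow> bool" where
  "cons3 D \<xi> y \<omega> \<longleftrightarrow> (\<forall>t\<in>{1..horizon D}. \<forall>i<mdim D 3 t.
     (\<Sum>\<tau>\<in>{1..t}. \<Sum>j<ndim D \<tau>. Amat D 3 t \<tau> i j * polval D \<xi> y \<tau> \<omega> j)
     + (\<Sum>\<tau>\<in>{1..<t}. \<Sum>j<xdim D. Bmat D 3 t \<tau> i j * \<xi> \<omega> \<tau> j) \<le> bvec D 3 t i)"

definition Mset1 :: "msp_data \<Rightarrow> 'a measure \<Rightarrow> ('a \<Rightarrow> nat \<Rightarrow> nat \<Rightarrow> real) \<Rightarrow> real \<Rightarrow> policy set" where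
  "Mset1 D M \<xi> p = {y. is_policy D y
      \<and> measure M {\<omega>\<in>space M. cons2 D \<xi> y \<omega>} \<ge> p
      \<and> (AE \<omega> in M. cons3 D \<xi> y \<omega>)}"

definition Mset2 :: "msp_data \<Rightarrow> 'a measure \<Rightarrow> ('a \<Rightarrow> nat \<Rightarrow> nat \<Rightarrow> real) \<Rightarrow> real \<Rightarrow> policy set" where
  "Mset2 D M \<xi> p = {y. is_policy D y
      \<and> measure M {\<omega>\<in>space M. cons2 D \<xi> y \<omega> \<and> cons3 D \<xi> y \<omega>} \<ge> p}"

definition eexpect :: "'a measure \<Rightarrow> ('a \<Rightarrow> real) \<Rightarrow> ereal" where
  "eexpect M X = enn2ereal (\<integral>\<^sup>+\<omega>. ennreal (X \<omega>) \<partial>M) - enn2ereal (\<integral>\<^sup>+\<omega>. ennreal (- X \<omega>) \<partial>M)"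

definition hobj :: "msp_data \<Rightarrow> 'a measure \<Rightarrow> ('a \<Rightarrow> nat \<Rightarrow> nat \<Rightarrow> real) \<Rightarrow> policy \<Rightarrow> ereal" where
  "hobj D M \<xi> y = (\<Sum>t\<in>{1..horizon D}. eexpect M (\<lambda>\<omega>.
      (\<Sum>j<ndim D t. hvec D t j * polval D \<xi> y t \<omega> j)
      + (\<Sum>i<mdim D 1 t. Pvec D t i * max 0
          ((\<Sum>\<tau>\<in>{1..t}. \<Sum>j<ndim D \<tau>. Amat D 1 t \<tau> i j * polval D \<xi> y \<tau> \<omega> j)
           + (\<Sum>\<tau>\<in>{1..t}. \<Sum>j<xdim D. Bmat D 1 t \<tau> i j * \<xi> \<omega> \<tau> j) - bvec D 1 t i))))"

text \<open>X_t(z_{1:t-1}, xi_{1:t-1}); zz tau is z_tau, g (tau, j) is the j-th component of xi_tau.\<close>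
definition Xset :: "msp_data \<Rightarrow> nat \<Rightarrow> (nat \<Rightarrow> vec) \<Rightarrow> hist \<Rightarrow> vec set" where
  "Xset D t zz g = {u \<in> PiE {..<ndim D t} (\<lambda>_. UNIV). \<forall>i<mdim D 3 t.
      (\<Sum>j<ndim D t. Amat D 3 t t i j * u j)
        \<le> bvec D 3 t i - (\<Sum>\<tau>\<in>{1..<t}. \<Sum>j<xdim D. Bmat D 3 t \<tau> i j * g (\<tau>, j))
                       - (\<Sum>\<tau>\<in>{1..<t}. \<Sum>j<ndim D \<tau>. Amat D 3 t \<tau> i j * zz \<tau> j)}"

definition euclid_proj :: "nat \<Rightarrow> vec set \<Rightarrow> vec \<Rightarrow> vec" where
  "euclid_proj n X v = (THE u. u \<in> X \<and> (\<forall>w\<in>X. sqrt (\<Sum>i<n. (u i - v i)^2) \<le> sqrt (\<Sum>i<n. (w i - v i)^2)))"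

text \<open>Recursive construction of z = Pi(y): Pi_pre D y k holds z_1, ..., z_k.\<close>
primrec Pi_pre :: "msp_data \<Rightarrow> policy \<Rightarrow> nat \<Rightarrow> policy" where
  "Pi_pre D y 0 = (\<lambda>_ _. undefined)"
| "Pi_pre D y (Suc k) = (Pi_pre D y k)(Suc k := (\<lambda>g.
     euclid_proj (ndim D (Suc k))
       (Xset D (Suc k) (\<lambda>\<tau>. Pi_pre D y k \<tau> (restrict g (Hidx D \<tau>))) g)
       (y (Suc k) g)))"

definition Pi_op :: "msp_data \<Rightarrow> policy \<Rightarrow> policy" where
  "Pi_op D y = (\<lambda>t. Pi_pre D y t t)"

definition argmin_set :: "('b \<Rightarrow> ereal) \<Rightarrow> 'b set \<Rightarrow> 'b set" where
  "argmin_set f S = {y \<in> S. \<forall>y'\<in>S. f y \<le> f y'}"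

end

theory Submission
  imports Defs
begin

text \<open>Applying \<open>\<Pi>\<close> makes the almost-sure constraints hold in every scenario, because each
  stage \<open>z\<^sub>t\<close> is projected into the polyhedron \<open>X\<^sub>t\<close> determined by the earlier stages; and in
  every scenario where \<open>y\<close> already satisfies them, \<open>\<Pi>\<close> leaves \<open>y\<close> unchanged, since projecting a point
  of a closed convex set onto it returns the point. Hence \<open>\<Pi>\<close> maps \<open>M\<^sub>2\<close> into \<open>M\<^sub>1\<close>, and on
  \<open>M\<^sub>1 \<subseteq> M\<^sub>2\<close> it changes policies only on a null set, so it preserves their cost. The inequalities
  between the infima then reduce to inclusions between the feasible sets.\<close>

section \<open>Euclidean projection onto polyhedra\<close>

definition sq_dist :: "nat \<Rightarrow> vec \<Rightarrow> vec \<Rightarrow> real" where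
  "sq_dist n u v = (\<Sum>i<n. (u i - v i)^2)"

definition midpoint_convex :: "nat \<Rightarrow> vec set \<Rightarrow> bool" where
  "midpoint_convex n X \<longleftrightarrow> (\<forall>u\<in>X. \<forall>w\<in>X. restrict (\<lambda>i. (u i + w i) / 2) {..<n} \<in> X)"

lemma euclid_proj_sq_dist:
  "euclid_proj n X v = (THE u. u \<in> X \<and> (\<forall>w\<in>X. sq_dist n u v \<le> sq_dist n w v))"
  unfolding euclid_proj_def sq_dist_def by simp

lemma sq_dist_midpoint:
  "sq_dist n (restrict (\<lambda>i. (u i + w i) / 2) {..<n}) v
     = (sq_dist n u v + sq_dist n w v) / 2 - sq_dist n u w / 4"
proof -
  have "((u i + w i) / 2 - v i)^2 = ((u i - v i)^2 + (w i - v i)^2) / 2 - (u i - w i)^2 / 4" for i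
    by (simp add: power2_eq_square field_simps)
  then show ?thesis
    unfolding sq_dist_def by (simp add: sum_subtractf sum_divide_distrib[symmetric] sum.distrib)
qed

lemma sq_dist_nonpos_imp_eq:
  assumes "sq_dist n u w \<le> 0" and "i < n"
  shows "u i = w i"
proof -
  have "sq_dist n u w = 0"
    using assms(1) unfolding sq_dist_def by (intro order_antisym sum_nonneg) auto
  then have "\<forall>i\<in>{..<n}. (u i - w i)^2 = 0"
    unfolding sq_dist_def by (subst sum_nonneg_eq_0_iff[symmetric]) auto
  then show ?thesis using assms(2) by simp
qed

lemma euclid_proj_eqI:
  assumes "X \<subseteq> PiE {..<n} (\<lambda>_. UNIV)" and "midpoint_convex n X"
    and "u \<in> X" and "\<forall>w\<in>X. sq_dist n u v \<le> sq_dist n w v"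
  shows "euclid_proj n X v = u"
  unfolding euclid_proj_sq_dist
proof (rule the_equality)
  fix w assume w: "w \<in> X \<and> (\<forall>x\<in>X. sq_dist n w v \<le> sq_dist n x v)"
  define m where "m = restrict (\<lambda>i. (u i + w i) / 2) {..<n}"
  have "m \<in> X" using assms(2,3) w unfolding midpoint_convex_def m_def by blast
  then have "sq_dist n u v \<le> sq_dist n m v" using assms(4) by blast
  moreover have "sq_dist n u v = sq_dist n w v" using assms(3,4) w by (meson order_antisym)
  ultimately have "sq_dist n u w \<le> 0" unfolding m_def sq_dist_midpoint by simp
  then have "\<forall>i<n. w i = u i" using sq_dist_nonpos_imp_eq by metis
  moreover have "w \<in> PiE {..<n} (\<lambda>_. UNIV)" "u \<in> PiE {..<n} (\<lambda>_. UNIV)" using assms(1,3) w by auto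
  ultimately show "w = u" by (metis PiE_ext lessThan_iff)
qed (use assms(3,4) in blast)

lemma continuous_map_sq_dist:
  "continuous_map (product_topology (\<lambda>_. euclideanreal) {..<n}) euclideanreal (\<lambda>u. sq_dist n u v)"
  unfolding sq_dist_def
  by (intro continuous_map_sum continuous_map_real_pow continuous_map_diff
      continuous_map_canonical_const continuous_map_product_projection) auto

lemma sq_dist_sublevel_subset_box:
  assumes "u \<in> PiE {..<n} (\<lambda>_. UNIV)" and "sq_dist n u v \<le> r"
  shows "u \<in> PiE {..<n} (\<lambda>i. {v i - sqrt r .. v i + sqrt r})"
proof -
  have "u i \<in> {v i - sqrt r .. v i + sqrt r}" if "i < n" for i
  proof -
    have "(u i - v i)^2 \<le> sq_dist n u v"
      unfolding sq_dist_def using that by (intro member_le_sum) auto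
    then have "\<bar>u i - v i\<bar> \<le> sqrt r"
      using assms(2) by (metis order_trans real_sqrt_abs real_sqrt_le_mono)
    then show ?thesis by (simp add: abs_le_iff)
  qed
  then show ?thesis using assms(1) by (simp add: PiE_iff)
qed

lemma nearest_point_exists:
  assumes closed: "closedin (product_topology (\<lambda>_. euclideanreal) {..<n}) X" and "X \<noteq> {}"
  shows "\<exists>u\<in>X. \<forall>w\<in>X. sq_dist n u v \<le> sq_dist n w v"
proof -
  let ?T = "product_topology (\<lambda>_. euclideanreal) {..<n}" and ?f = "\<lambda>u. sq_dist n u v"
  obtain u0 where u0: "u0 \<in> X" using \<open>X \<noteq> {}\<close> by blast
  \<comment> \<open>A sublevel set of the distance is bounded, hence a compact part of \<open>X\<close> containing a minimiser.\<close>
  define S where "S = X \<inter> {u \<in> topspace ?T. ?f u \<in> {..?f u0}}"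
  have "closedin ?T S"
    unfolding S_def by (intro closedin_Int closed closedin_continuous_map_preimage[OF continuous_map_sq_dist]) auto
  moreover have "S \<subseteq> PiE {..<n} (\<lambda>i. {v i - sqrt (?f u0) .. v i + sqrt (?f u0)})"
  proof
    fix u assume "u \<in> S"
    then show "u \<in> PiE {..<n} (\<lambda>i. {v i - sqrt (?f u0) .. v i + sqrt (?f u0)})"
      unfolding S_def by (intro sq_dist_sublevel_subset_box) auto
  qed
  moreover have "compactin ?T (PiE {..<n} (\<lambda>i. {v i - sqrt (?f u0) .. v i + sqrt (?f u0)}))"
    by (simp add: compactin_PiE)
  ultimately have "compactin ?T S"
    using closed_Int_compactin by (metis Int_absorb2)
  then have "compact (?f ` S)"
    using image_compactin[OF _ continuous_map_sq_dist] by simp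
  moreover have "u0 \<in> S" using u0 closedin_subset[OF closed] unfolding S_def by auto
  ultimately obtain u where u: "u \<in> S" and min: "\<forall>w\<in>S. ?f u \<le> ?f w"
    using compact_attains_inf[of "?f ` S"] by auto
  have "?f u \<le> ?f w" if "w \<in> X" for w
  proof (cases "w \<in> S")
    case False
    then have "?f u0 \<le> ?f w" using that closedin_subset[OF closed] unfolding S_def by auto
    then show ?thesis using u unfolding S_def by auto
  qed (use min in blast)
  then show ?thesis using u unfolding S_def by blast
qed

lemma euclid_proj_in:
  assumes "closedin (product_topology (\<lambda>_. euclideanreal) {..<n}) X"
    and "midpoint_convex n X" and "X \<noteq> {}"
  shows "euclid_proj n X v \<in> X"
proof -
  obtain u where "u \<in> X" "\<forall>w\<in>X. sq_dist n u v \<le> sq_dist n w v"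
    using nearest_point_exists[OF assms(1,3)] by blast
  moreover have "X \<subseteq> PiE {..<n} (\<lambda>_. UNIV)" using closedin_subset[OF assms(1)] by simp
  ultimately show ?thesis using euclid_proj_eqI[OF _ assms(2)] by metis
qed

lemma euclid_proj_fixed:
  assumes "X \<subseteq> PiE {..<n} (\<lambda>_. UNIV)" and "midpoint_convex n X" and "u \<in> X"
  shows "euclid_proj n X u = u"
  by (rule euclid_proj_eqI[OF assms]) (simp add: sq_dist_def sum_nonneg)

definition polyhedron :: "nat \<Rightarrow> nat \<Rightarrow> (nat \<Rightarrow> nat \<Rightarrow> real) \<Rightarrow> (nat \<Rightarrow> real) \<Rightarrow> vec set" where
  "polyhedron n m a c = {u \<in> PiE {..<n} (\<lambda>_. UNIV). \<forall>i<m. (\<Sum>j<n. a i j * u j) \<le> c i}"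

lemma polyhedron_subset_PiE: "polyhedron n m a c \<subseteq> PiE {..<n} (\<lambda>_. UNIV)"
  unfolding polyhedron_def by blast

lemma closedin_polyhedron:
  "closedin (product_topology (\<lambda>_. euclideanreal) {..<n}) (polyhedron n m a c)"
  (is "closedin ?T _")
proof (cases "m = 0")
  case True
  then show ?thesis unfolding polyhedron_def using closedin_topspace[of ?T] by simp
next
  case False
  have "polyhedron n m a c = (\<Inter>i<m. {u \<in> topspace ?T. (\<Sum>j<n. a i j * u j) \<in> {..c i}})"
    unfolding polyhedron_def using False by auto
  also have "closedin ?T \<dots>"
    using False
    by (intro closedin_INT closedin_continuous_map_preimage[where Y = euclideanreal]
        continuous_map_sum continuous_map_real_mult_left continuous_map_product_projection) auto
  finally show ?thesis .
qed

lemma midpoint_convex_polyhedron: "midpoint_convex n (polyhedron n m a c)"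
  unfolding midpoint_convex_def
proof (intro ballI)
  fix u w assume u: "u \<in> polyhedron n m a c" and w: "w \<in> polyhedron n m a c"
  let ?m = "restrict (\<lambda>i. (u i + w i) / 2) {..<n}"
  have "(\<Sum>j<n. a i j * ?m j) \<le> c i" if "i < m" for i
  proof -
    have "(\<Sum>j<n. a i j * ?m j) = (\<Sum>j<n. (a i j * u j + a i j * w j) / 2)"
      by (intro sum.cong) (auto simp: distrib_left)
    also have "\<dots> = ((\<Sum>j<n. a i j * u j) + (\<Sum>j<n. a i j * w j)) / 2"
      by (simp add: sum.distrib sum_divide_distrib[symmetric])
    also have "\<dots> \<le> c i"
      using u w that unfolding polyhedron_def by fastforce
    finally show ?thesis .
  qed
  then show "?m \<in> polyhedron n m a c" unfolding polyhedron_def by simp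
qed

section \<open>The projection operator \<open>\<Pi>\<close>\<close>

lemma Xset_eq_polyhedron:
  "Xset D t zz g = polyhedron (ndim D t) (mdim D 3 t) (Amat D 3 t t)
     (\<lambda>i. bvec D 3 t i - (\<Sum>\<tau>\<in>{1..<t}. \<Sum>j<xdim D. Bmat D 3 t \<tau> i j * g (\<tau>, j))
                      - (\<Sum>\<tau>\<in>{1..<t}. \<Sum>j<ndim D \<tau>. Amat D 3 t \<tau> i j * zz \<tau> j))"
  unfolding Xset_def polyhedron_def by simp

lemma Xset_cong: "(\<And>\<tau>. \<tau> \<in> {1..<t} \<Longrightarrow> zz \<tau> = zz' \<tau>) \<Longrightarrow> Xset D t zz g = Xset D t zz' g"
  unfolding Xset_def by (metis (no_types, lifting) sum.cong)

lemma Pi_pre_stable: "\<tau> \<le> k \<Longrightarrow> Pi_pre D y k \<tau> = Pi_pre D y \<tau> \<tau>"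
  by (induction k) (auto simp: le_Suc_eq)

lemma histo_restrict: "\<tau> \<le> t \<Longrightarrow> restrict (histo D \<xi> t \<omega>) (Hidx D \<tau>) = histo D \<xi> \<tau> \<omega>"
  unfolding histo_def Hidx_def by (auto simp: fun_eq_iff)

lemma polval_Pi_op:
  assumes "1 \<le> t"
  shows "polval D \<xi> (Pi_op D y) t \<omega> = euclid_proj (ndim D t)
     (Xset D t (\<lambda>\<tau>. polval D \<xi> (Pi_op D y) \<tau> \<omega>) (histo D \<xi> t \<omega>)) (polval D \<xi> y t \<omega>)"
proof -
  obtain k where t: "t = Suc k" using assms by (cases t) auto
  have "Xset D t (\<lambda>\<tau>. Pi_pre D y k \<tau> (restrict (histo D \<xi> t \<omega>) (Hidx D \<tau>))) (histo D \<xi> t \<omega>)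
      = Xset D t (\<lambda>\<tau>. polval D \<xi> (Pi_op D y) \<tau> \<omega>) (histo D \<xi> t \<omega>)"
  proof (rule Xset_cong)
    fix \<tau> assume "\<tau> \<in> {1..<t}"
    then have "\<tau> \<le> k" "\<tau> \<le> t" using t by auto
    then show "Pi_pre D y k \<tau> (restrict (histo D \<xi> t \<omega>) (Hidx D \<tau>)) = polval D \<xi> (Pi_op D y) \<tau> \<omega>"
      using Pi_pre_stable[of \<tau> k D y] histo_restrict[of \<tau> t D \<xi> \<omega>] by (simp add: polval_def Pi_op_def)
  qed
  then show ?thesis by (simp add: t Pi_op_def polval_def)
qed

lemma cons3_iff_in_Xset:
  assumes "\<forall>t\<in>{1..horizon D}. polval D \<xi> y t \<omega> \<in> PiE {..<ndim D t} (\<lambda>_. UNIV)"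
  shows "cons3 D \<xi> y \<omega> \<longleftrightarrow>
    (\<forall>t\<in>{1..horizon D}. polval D \<xi> y t \<omega> \<in> Xset D t (\<lambda>\<tau>. polval D \<xi> y \<tau> \<omega>) (histo D \<xi> t \<omega>))"
  unfolding cons3_def Xset_def
proof (intro ball_cong refl)
  fix t assume t: "t \<in> {1..horizon D}"
  have split: "{1..t} = insert t {1..<t}" using t by auto
  have hist: "(\<Sum>\<tau>\<in>{1..<t}. \<Sum>j<xdim D. Bmat D 3 t \<tau> i j * histo D \<xi> t \<omega> (\<tau>, j))
      = (\<Sum>\<tau>\<in>{1..<t}. \<Sum>j<xdim D. Bmat D 3 t \<tau> i j * \<xi> \<omega> \<tau> j)" for i
    by (intro sum.cong refl) (auto simp: histo_def Hidx_def)
  show "(\<forall>i<mdim D 3 t.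
      (\<Sum>\<tau>\<in>{1..t}. \<Sum>j<ndim D \<tau>. Amat D 3 t \<tau> i j * polval D \<xi> y \<tau> \<omega> j)
      + (\<Sum>\<tau>\<in>{1..<t}. \<Sum>j<xdim D. Bmat D 3 t \<tau> i j * \<xi> \<omega> \<tau> j) \<le> bvec D 3 t i)
    \<longleftrightarrow> polval D \<xi> y t \<omega> \<in> {u \<in> PiE {..<ndim D t} (\<lambda>_. UNIV). \<forall>i<mdim D 3 t.
      (\<Sum>j<ndim D t. Amat D 3 t t i j * u j)
        \<le> bvec D 3 t i - (\<Sum>\<tau>\<in>{1..<t}. \<Sum>j<xdim D. Bmat D 3 t \<tau> i j * histo D \<xi> t \<omega> (\<tau>, j))
           - (\<Sum>\<tau>\<in>{1..<t}. \<Sum>j<ndim D \<tau>. Amat D 3 t \<tau> i j * polval D \<xi> y \<tau> \<omega> j)}"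
    using assms t unfolding split hist by (simp add: le_diff_eq del: PiE_iff)
qed

lemma polval_Pi_op_in_Xset:
  assumes "\<forall>t\<in>{1..horizon D}. \<forall>zz g. Xset D t zz g \<noteq> {}" and "t \<in> {1..horizon D}"
  shows "polval D \<xi> (Pi_op D y) t \<omega> \<in> Xset D t (\<lambda>\<tau>. polval D \<xi> (Pi_op D y) \<tau> \<omega>) (histo D \<xi> t \<omega>)"
proof -
  let ?X = "Xset D t (\<lambda>\<tau>. polval D \<xi> (Pi_op D y) \<tau> \<omega>) (histo D \<xi> t \<omega>)"
  have "?X \<noteq> {}" using assms by blast
  then have "euclid_proj (ndim D t) ?X (polval D \<xi> y t \<omega>) \<in> ?X"
    unfolding Xset_eq_polyhedron by (intro euclid_proj_in closedin_polyhedron midpoint_convex_polyhedron)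
  then show ?thesis using assms(2) by (subst polval_Pi_op) auto
qed

lemma polval_in_PiE:
  assumes "is_policy D y" and "t \<in> {1..horizon D}"
  shows "polval D \<xi> y t \<omega> \<in> PiE {..<ndim D t} (\<lambda>_. UNIV)"
proof -
  have m: "y t \<in> measurable (PiM (Hidx D t) (\<lambda>_. (borel :: real measure))) (PiM {..<ndim D t} (\<lambda>_. (borel :: real measure)))"
    using assms unfolding is_policy_def by blast
  have "histo D \<xi> t \<omega> \<in> space (PiM (Hidx D t) (\<lambda>_. (borel :: real measure)))"
    unfolding histo_def by (simp add: space_PiM)
  from measurable_space[OF m this] show ?thesis by (simp add: polval_def space_PiM)
qed

lemma cons3_Pi_op:
  assumes "\<forall>t\<in>{1..horizon D}. \<forall>zz g. Xset D t zz g \<noteq> {}"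
  shows "cons3 D \<xi> (Pi_op D y) \<omega>"
proof -
  have mem: "polval D \<xi> (Pi_op D y) t \<omega>
      \<in> Xset D t (\<lambda>\<tau>. polval D \<xi> (Pi_op D y) \<tau> \<omega>) (histo D \<xi> t \<omega>)" if "t \<in> {1..horizon D}" for t
    using polval_Pi_op_in_Xset[OF assms that] .
  have "Xset D t zz g \<subseteq> PiE {..<ndim D t} (\<lambda>_. UNIV)" for t zz g
    unfolding Xset_eq_polyhedron by (rule polyhedron_subset_PiE)
  then have "\<forall>t\<in>{1..horizon D}. polval D \<xi> (Pi_op D y) t \<omega> \<in> PiE {..<ndim D t} (\<lambda>_. UNIV)"
    using mem by (meson subsetD)
  with mem show ?thesis by (simp add: cons3_iff_in_Xset del: PiE_iff)
qed

lemma polval_Pi_op_eq_if_cons3: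
  assumes "is_policy D y" and "cons3 D \<xi> y \<omega>"
  shows "t \<in> {1..horizon D} \<Longrightarrow> polval D \<xi> (Pi_op D y) t \<omega> = polval D \<xi> y t \<omega>"
proof (induction t rule: less_induct)
  case (less t)
  let ?X = "Xset D t (\<lambda>\<tau>. polval D \<xi> y \<tau> \<omega>) (histo D \<xi> t \<omega>)"
  have "Xset D t (\<lambda>\<tau>. polval D \<xi> (Pi_op D y) \<tau> \<omega>) (histo D \<xi> t \<omega>) = ?X"
    by (rule Xset_cong) (use less in auto)
  then have "polval D \<xi> (Pi_op D y) t \<omega> = euclid_proj (ndim D t) ?X (polval D \<xi> y t \<omega>)"
    using polval_Pi_op[of t D \<xi> y \<omega>] less.prems by simp
  also have "\<dots> = polval D \<xi> y t \<omega>"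
  proof -
    have "\<forall>t\<in>{1..horizon D}. polval D \<xi> y t \<omega> \<in> PiE {..<ndim D t} (\<lambda>_. UNIV)"
      using polval_in_PiE[OF assms(1), of _ \<xi> \<omega>] by (simp del: PiE_iff)
    then have "\<forall>t\<in>{1..horizon D}. polval D \<xi> y t \<omega> \<in> Xset D t (\<lambda>\<tau>. polval D \<xi> y \<tau> \<omega>) (histo D \<xi> t \<omega>)"
      using assms(2) cons3_iff_in_Xset by metis
    then have "polval D \<xi> y t \<omega> \<in> ?X"
      using less.prems by blast
    then show ?thesis
      unfolding Xset_eq_polyhedron by (intro euclid_proj_fixed polyhedron_subset_PiE midpoint_convex_polyhedron)
  qed
  finally show ?case .
qed

lemma polval_measurable:
  assumes "\<forall>t\<in>{1..horizon D}. \<forall>j<xdim D. (\<lambda>\<omega>. \<xi> \<omega> t j) \<in> borel_measurable M"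
    and "is_policy D y" and "t \<in> {1..horizon D}" and "j < ndim D t"
  shows "(\<lambda>\<omega>. polval D \<xi> y t \<omega> j) \<in> borel_measurable M"
proof -
  have "histo D \<xi> t \<in> measurable M (PiM (Hidx D t) (\<lambda>_. borel))"
    unfolding histo_def[abs_def]
  proof (rule measurable_restrict)
    fix i assume "i \<in> Hidx D t"
    then show "(\<lambda>\<omega>. case i of (\<tau>, j) \<Rightarrow> \<xi> \<omega> \<tau> j) \<in> borel_measurable M"
      using assms(1,3) unfolding Hidx_def by auto
  qed
  moreover have "y t \<in> measurable (PiM (Hidx D t) (\<lambda>_. borel)) (PiM {..<ndim D t} (\<lambda>_. (borel :: real measure)))"
    using assms(2,3) unfolding is_policy_def by blast
  moreover have "(\<lambda>x. x j) \<in> measurable (PiM {..<ndim D t} (\<lambda>_. (borel :: real measure))) borel"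
    using measurable_component_singleton[of j "{..<ndim D t}"] assms(4) by simp
  ultimately show ?thesis unfolding polval_def by measurable
qed

lemma pred_cons2_cons3:
  assumes "\<forall>t\<in>{1..horizon D}. \<forall>j<xdim D. (\<lambda>\<omega>. \<xi> \<omega> t j) \<in> borel_measurable M"
    and "is_policy D y"
  shows "Measurable.pred M (cons2 D \<xi> y)" and "Measurable.pred M (cons3 D \<xi> y)"
proof -
  have [measurable]: "(\<lambda>\<omega>. \<xi> \<omega> t j) \<in> borel_measurable M"
    if "t \<in> {1..horizon D}" "j < xdim D" for t j
    using assms(1) that by blast
  have [measurable]: "(\<lambda>\<omega>. polval D \<xi> y t \<omega> j) \<in> borel_measurable M"
    if "t \<in> {1..horizon D}" "j < ndim D t" for t j
    using polval_measurable[OF assms that] .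
  show "Measurable.pred M (cons2 D \<xi> y)" unfolding cons2_def by measurable
  show "Measurable.pred M (cons3 D \<xi> y)" unfolding cons3_def by measurable
qed

lemma eexpect_cong_AE:
  assumes "AE \<omega> in M. X \<omega> = Y \<omega>"
  shows "eexpect M X = eexpect M Y"
proof -
  have "AE \<omega> in M. ennreal (X \<omega>) = ennreal (Y \<omega>)" "AE \<omega> in M. ennreal (- X \<omega>) = ennreal (- Y \<omega>)"
    using assms by (auto elim: eventually_mono)
  then show ?thesis unfolding eexpect_def by (simp add: nn_integral_cong_AE)
qed

lemma hobj_cong_AE:
  assumes "AE \<omega> in M. \<forall>t\<in>{1..horizon D}. polval D \<xi> z t \<omega> = polval D \<xi> y t \<omega>"
  shows "hobj D M \<xi> z = hobj D M \<xi> y"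
  unfolding hobj_def
proof (intro sum.cong refl eexpect_cong_AE eventually_mono[OF assms], goal_cases)
  case (1 t \<omega>)
  then have "polval D \<xi> z \<tau> \<omega> = polval D \<xi> y \<tau> \<omega>" if "\<tau> \<in> {1..t}" for \<tau>
    using that by auto
  then show ?case using 1 by (simp cong: sum.cong_simp)
qed

lemma cons2_cong:
  assumes "\<forall>t\<in>{1..horizon D}. polval D \<xi> z t \<omega> = polval D \<xi> y t \<omega>"
  shows "cons2 D \<xi> z \<omega> \<longleftrightarrow> cons2 D \<xi> y \<omega>"
  unfolding cons2_def
proof (intro ball_cong refl, goal_cases)
  case (1 t)
  then have "polval D \<xi> z \<tau> \<omega> = polval D \<xi> y \<tau> \<omega>" if "\<tau> \<in> {1..t}" for \<tau>
    using assms that by auto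
  then show ?case by (simp cong: sum.cong_simp)
qed

lemma Mset1_subset_Mset2:
  assumes "prob_space M"
    and "\<forall>t\<in>{1..horizon D}. \<forall>j<xdim D. (\<lambda>\<omega>. \<xi> \<omega> t j) \<in> borel_measurable M"
  shows "Mset1 D M \<xi> p \<subseteq> Mset2 D M \<xi> p"
proof
  interpret prob_space M by (fact assms(1))
  fix y assume y: "y \<in> Mset1 D M \<xi> p"
  then have pol: "is_policy D y" and ae: "AE \<omega> in M. cons3 D \<xi> y \<omega>"
    by (simp_all add: Mset1_def)
  note [measurable] = pred_cons2_cons3[OF assms(2) pol]
  have "p \<le> measure M {\<omega> \<in> space M. cons2 D \<xi> y \<omega>}"
    using y by (simp add: Mset1_def)
  also have "\<dots> \<le> measure M {\<omega> \<in> space M. cons2 D \<xi> y \<omega> \<and> cons3 D \<xi> y \<omega>}"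
    using ae by (intro finite_measure_mono_AE) (simp_all add: eventually_mono)
  finally show "y \<in> Mset2 D M \<xi> p" using pol unfolding Mset2_def by simp
qed

lemma Pi_op_in_Mset1:
  assumes "prob_space M"
    and "\<forall>t\<in>{1..horizon D}. \<forall>j<xdim D. (\<lambda>\<omega>. \<xi> \<omega> t j) \<in> borel_measurable M"
    and "\<forall>t\<in>{1..horizon D}. \<forall>zz g. Xset D t zz g \<noteq> {}"
    and "is_policy D (Pi_op D y)"
    and "y \<in> Mset2 D M \<xi> p"
  shows "Pi_op D y \<in> Mset1 D M \<xi> p"
proof -
  interpret prob_space M by (fact assms(1))
  have pol: "is_policy D y" using assms(5) by (simp add: Mset2_def)
  have "p \<le> measure M {\<omega> \<in> space M. cons2 D \<xi> y \<omega> \<and> cons3 D \<xi> y \<omega>}"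
    using assms(5) by (simp add: Mset2_def)
  also have "\<dots> \<le> measure M {\<omega> \<in> space M. cons2 D \<xi> (Pi_op D y) \<omega>}"
  proof (rule finite_measure_mono)
    show "{\<omega> \<in> space M. cons2 D \<xi> y \<omega> \<and> cons3 D \<xi> y \<omega>} \<subseteq> {\<omega> \<in> space M. cons2 D \<xi> (Pi_op D y) \<omega>}"
    proof (rule Collect_mono_iff[THEN iffD2], intro allI impI conjI)
      fix \<omega> assume \<omega>: "\<omega> \<in> space M \<and> cons2 D \<xi> y \<omega> \<and> cons3 D \<xi> y \<omega>"
      then have "\<forall>t\<in>{1..horizon D}. polval D \<xi> (Pi_op D y) t \<omega> = polval D \<xi> y t \<omega>"
        using \<omega> by (intro ballI polval_Pi_op_eq_if_cons3[OF pol]) blast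
      then have "cons2 D \<xi> (Pi_op D y) \<omega> \<longleftrightarrow> cons2 D \<xi> y \<omega>" by (rule cons2_cong)
      then show "cons2 D \<xi> (Pi_op D y) \<omega>" using \<omega> by blast
      show "\<omega> \<in> space M" using \<omega> by blast
    qed
    show "{\<omega> \<in> space M. cons2 D \<xi> (Pi_op D y) \<omega>} \<in> sets M"
      using pred_cons2_cons3(1)[OF assms(2,4)] by (simp add: pred_def)
  qed
  moreover have "AE \<omega> in M. cons3 D \<xi> (Pi_op D y) \<omega>"
    by (intro AE_I2 cons3_Pi_op[OF assms(3)])
  ultimately show ?thesis using assms(4) by (simp add: Mset1_def)
qed

lemma Pi_op_image_Mset2_subset:
  assumes "prob_space M"
    and "\<forall>t\<in>{1..horizon D}. \<forall>j<xdim D. (\<lambda>\<omega>. \<xi> \<omega> t j) \<in> borel_measurable M"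
    and "\<forall>t\<in>{1..horizon D}. \<forall>zz g. Xset D t zz g \<noteq> {}"
    and "\<forall>y. is_policy D y \<longrightarrow> is_policy D (Pi_op D y)"
  shows "Pi_op D ` Mset2 D M \<xi> p \<subseteq> Mset1 D M \<xi> p"
proof (rule image_subsetI)
  fix y assume y: "y \<in> Mset2 D M \<xi> p"
  then have "is_policy D y" by (simp add: Mset2_def)
  then show "Pi_op D y \<in> Mset1 D M \<xi> p" using Pi_op_in_Mset1[OF assms(1-3) _ y] assms(4) by blast
qed

lemma hobj_Pi_op_eq:
  assumes "y \<in> Mset1 D M \<xi> p"
  shows "hobj D M \<xi> (Pi_op D y) = hobj D M \<xi> y"
proof (rule hobj_cong_AE)
  have pol: "is_policy D y" and ae: "AE \<omega> in M. cons3 D \<xi> y \<omega>"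
    using assms by (simp_all add: Mset1_def)
  show "AE \<omega> in M. \<forall>t\<in>{1..horizon D}. polval D \<xi> (Pi_op D y) t \<omega> = polval D \<xi> y t \<omega>"
    using ae by (rule eventually_mono) (intro ballI polval_Pi_op_eq_if_cons3[OF pol])
qed

theorem lemma2p2:
  fixes D :: msp_data and M :: "'a measure" and \<xi> :: "'a \<Rightarrow> nat \<Rightarrow> nat \<Rightarrow> real"
    and p :: real and K :: "policy set"
  assumes "prob_space M"
    and "horizon D \<ge> 2" and "xdim D \<ge> 1" and "\<forall>t\<in>{1..horizon D}. ndim D t \<ge> 1"
    and "\<forall>t\<in>{1..horizon D}. \<forall>j<xdim D. (\<lambda>\<omega>. \<xi> \<omega> t j) \<in> borel_measurable M"
    and "\<forall>t\<in>{1..horizon D}. \<forall>i<mdim D 3 t. \<forall>j<xdim D. Bmat D 3 t t i j = 0"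
    and "\<forall>t\<in>{1..horizon D}. \<forall>i<mdim D 1 t. Pvec D t i \<ge> 0"
    and "0 < p" and "p \<le> 1"
    and "\<forall>t\<in>{1..horizon D}. \<forall>zz g. Xset D t zz g \<noteq> {}"
    and "\<forall>y. is_policy D y \<longrightarrow> is_policy D (Pi_op D y)"
    and "\<forall>y\<in>K. is_policy D y"
  defines "\<phi> \<equiv> Inf (hobj D M \<xi> ` Mset1 D M \<xi> p)"
    and "\<phi>1 \<equiv> Inf (hobj D M \<xi> ` (Mset1 D M \<xi> p \<inter> K))"
    and "\<phi>3 \<equiv> Inf (hobj D M \<xi> ` (Pi_op D ` (Mset2 D M \<xi> p \<inter> K)))"
    and "\<phi>4 \<equiv> Inf (hobj D M \<xi> ` (Mset1 D M \<xi> p \<inter> Pi_op D ` K))"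
    and "\<phi>2 \<equiv> Inf (hobj D M \<xi> ` (Pi_op D ` argmin_set (hobj D M \<xi>) (Mset2 D M \<xi> p \<inter> K)))"
  shows "Mset1 D M \<xi> p \<inter> K \<subseteq> Mset1 D M \<xi> p
    \<and> Pi_op D ` (Mset2 D M \<xi> p \<inter> K) \<subseteq> Mset1 D M \<xi> p
    \<and> Mset1 D M \<xi> p \<inter> Pi_op D ` K \<subseteq> Mset1 D M \<xi> p
    \<and> Pi_op D ` argmin_set (hobj D M \<xi>) (Mset2 D M \<xi> p \<inter> K) \<subseteq> Mset1 D M \<xi> p
    \<and> \<phi>1 \<ge> \<phi>3 \<and> \<phi>2 \<ge> \<phi>3 \<and> \<phi>3 \<ge> \<phi>4 \<and> \<phi>4 \<ge> \<phi>"
proof -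
  let ?M1 = "Mset1 D M \<xi> p" and ?M2 = "Mset2 D M \<xi> p" and ?h = "hobj D M \<xi>"
  have Pi_M2: "Pi_op D ` ?M2 \<subseteq> ?M1"
    by (rule Pi_op_image_Mset2_subset[OF assms(1,5,10,11)])
  have argmin_sub: "argmin_set ?h (?M2 \<inter> K) \<subseteq> ?M2 \<inter> K"
    unfolding argmin_set_def by blast
  have "\<phi>3 \<le> \<phi>1"
    unfolding \<phi>1_def \<phi>3_def
  proof (rule INF_mono)
    fix y assume y: "y \<in> ?M1 \<inter> K"
    then have "Pi_op D y \<in> Pi_op D ` (?M2 \<inter> K)" using Mset1_subset_Mset2[OF assms(1,5)] by blast
    moreover have "?h (Pi_op D y) = ?h y" using y hobj_Pi_op_eq by blast
    ultimately show "\<exists>z\<in>Pi_op D ` (?M2 \<inter> K). ?h z \<le> ?h y" by force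
  qed
  moreover have "\<phi>3 \<le> \<phi>2"
    unfolding \<phi>2_def \<phi>3_def by (rule INF_superset_mono) (use argmin_sub in auto)
  moreover have "\<phi>4 \<le> \<phi>3"
    unfolding \<phi>3_def \<phi>4_def by (rule INF_superset_mono) (use Pi_M2 in auto)
  moreover have "\<phi> \<le> \<phi>4"
    unfolding \<phi>_def \<phi>4_def by (rule INF_superset_mono) auto
  ultimately show ?thesis using Pi_M2 argmin_sub by blast
qed

end
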